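(* Let $m\ge 2$ and $\alpha\in[0,1]$. Every deterministic voting rule $f$ that takes ranked preferences with intensities as input satisfies, under mandatory elicitation of the intensities, $$\mathsf{dist}_\alpha(f)\ge 1+2\,\frac{1-\alpha^{\lfloor m/2\rfloor}}{1+\alpha^{\lfloor m/2\rfloor}}.$$
   Context: An election $\mathcal E=(N,A,\vec\sigma)$ has a finite set $N$ of $n$ agents, a set $A$ of $m$ alternatives, and a profile $\vec\sigma=(\sigma_1,\dots,\sigma_n)$. Each $\sigma_i=(\pi_i,\Join_i)$ consists of a bijection $\pi_i:[m]\to A$, where $\pi_i(1)$ is agent $i$'s most preferred alternative, and a map $\Join_i:[m-1]\to\{\succ,\succ\!\!\succ\}$ recording strong ($\succ\!\!\succ$) or ordinary ($\succ$) preference between consecutive alternatives. A metric $d$ on $N\cup A$ is nonnegative and symmetric, satisfies the triangle inequality, and has $d(x,x)=0$. For $\alpha\in[0,1]$, the profile $\vec\sigma$ is $\alpha$-consistent with $d$ under mandatory elicitation if for every agent $i$ and every $j\in[m-1]$: - if $\Join_i(j)=\,\succ$, then $d(i,\pi_i(j+1))\ge d(i,\pi_i(j))>\alpha\, d(i,\pi_i(j+1))$; - if $\Join_i(j)=\,\succ\!\!\succ$, then $d(i,\pi_i(j))\le \alpha\, d(i,\pi_i(j+1))$. Let $\mathrm{sc}_d(a)=\sum_{i\in N}d(i,a)$. Define $\mathsf{dist}_\alpha(a,\mathcal E)=\sup_d \mathrm{sc}_d(a)/\min_{b\in A}\mathrm{sc}_d(b)$ over such $\alpha$-consistent metrics $d$.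 For a deterministic voting rule $f$ (mapping any profile over the $m$ alternatives to an alternative), $\mathsf{dist}_\alpha(f)=\sup_{\mathcal E}\mathsf{dist}_\alpha(f(\vec\sigma),\mathcal E)$ over all elections with $m$ alternatives. *)

theory Defs
  imports Complex_Main "HOL-Library.Extended_Real"
begin

text \<open>Agents are 0..n-1, alternatives are 0..m-1.  Points of the metric space
  N \<union> A are encoded in the sum type: Inl i is agent i, Inr a is alternative a.
  A profile is given by rk (rk i j = alternative at rank j of agent i, ranks 1..m)
  and J (J i j = True means strong preference between ranks j and j+1,
  False means ordinary preference).\<close>

definition valid_profile :: "nat \<Rightarrow> nat \<Rightarrow> (nat \<Rightarrow> nat \<Rightarrow> nat) \<Rightarrow> bool" where
  "valid_profile m n rk \<longleftrightarrow> (\<forall>i<n. bij_betw (rk i) {1..m} {..<m})"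

definition points :: "nat \<Rightarrow> nat \<Rightarrow> (nat + nat) set" where
  "points m n = Inl ` {..<n} \<union> Inr ` {..<m}"

definition is_metric_on :: "'a set \<Rightarrow> ('a \<Rightarrow> 'a \<Rightarrow> real) \<Rightarrow> bool" where
  "is_metric_on P d \<longleftrightarrow>
     (\<forall>x\<in>P. \<forall>y\<in>P. d x y \<ge> 0 \<and> d x y = d y x \<and> d x x = 0 \<and>
        (\<forall>z\<in>P. d x z \<le> d x y + d y z))"

definition alpha_consistent ::
  "real \<Rightarrow> nat \<Rightarrow> nat \<Rightarrow> (nat \<Rightarrow> nat \<Rightarrow> nat) \<Rightarrow> (nat \<Rightarrow> nat \<Rightarrow> bool)
     \<Rightarrow> (nat + nat \<Rightarrow> nat + nat \<Rightarrow> real) \<Rightarrow> bool" where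
  "alpha_consistent \<alpha> m n rk J d \<longleftrightarrow>
     (\<forall>i<n. \<forall>j\<in>{1..m-1}.
        (if J i j
         then d (Inl i) (Inr (rk i j)) \<le> \<alpha> * d (Inl i) (Inr (rk i (j+1)))
         else d (Inl i) (Inr (rk i (j+1))) \<ge> d (Inl i) (Inr (rk i j)) \<and>
              d (Inl i) (Inr (rk i j)) > \<alpha> * d (Inl i) (Inr (rk i (j+1)))))"

definition social_cost :: "nat \<Rightarrow> (nat + nat \<Rightarrow> nat + nat \<Rightarrow> real) \<Rightarrow> nat \<Rightarrow> real" where
  "social_cost n d a = (\<Sum>i<n. d (Inl i) (Inr a))"

definition cost_ratio :: "real \<Rightarrow> real \<Rightarrow> ereal" where
  "cost_ratio x y = (if y = 0 then (if x = 0 then 1 else \<infinity>) else ereal (x / y))"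

definition dist_alt ::
  "real \<Rightarrow> nat \<Rightarrow> nat \<Rightarrow> (nat \<Rightarrow> nat \<Rightarrow> nat) \<Rightarrow> (nat \<Rightarrow> nat \<Rightarrow> bool) \<Rightarrow> nat \<Rightarrow> ereal" where
  "dist_alt \<alpha> m n rk J a =
     (SUP d \<in> {d. is_metric_on (points m n) d \<and> alpha_consistent \<alpha> m n rk J d}.
        cost_ratio (social_cost n d a) (Min (social_cost n d ` {..<m})))"

definition dist_rule ::
  "real \<Rightarrow> nat \<Rightarrow> (nat \<Rightarrow> (nat \<Rightarrow> nat \<Rightarrow> nat) \<Rightarrow> (nat \<Rightarrow> nat \<Rightarrow> bool) \<Rightarrow> nat) \<Rightarrow> ereal" where
  "dist_rule \<alpha> m f =
     (SUP (n, rk, J) \<in> {(n, rk, J). n \<ge> 1 \<and> valid_profile m n rk}.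
        dist_alt \<alpha> m n rk J (f n rk J))"

end

theory Submission
  imports Defs
begin

text \<open>Take two agents with opposite rankings and only ordinary preferences, and let
  \<open>k = \<lfloor>m/2\<rfloor>\<close>. Whatever the rule elects, the winner \<open>x\<close> has rank \<open>> k\<close> for one of
  the agents, say \<open>Y\<close>. Fix \<open>\<alpha> < \<rho> < 1\<close> and \<open>s = \<rho>\<^sup>k\<close>. Put \<open>Y\<close> at distance \<open>2 \<rho>\<^sup>k, 2 \<rho>\<^sup>k\<^sup>-\<^sup>1, \<dots>, 2\<close>
  from its alternatives in rank order (constant \<open>2\<close> from rank \<open>k + 1\<close> on) and the other
  agent at distance \<open>1 - s\<close> from every alternative; this is realised in the \<open>\<ell>\<^sub>1\<close>-plane
  and is \<open>\<alpha>\<close>-consistent because consecutive ratios are \<open>\<rho> > \<alpha>\<close> or \<open>1\<close>. Then \<open>x\<close> costs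
  \<open>3 - s\<close> while the top choice of \<open>Y\<close> costs \<open>1 + s\<close>, and letting \<open>\<rho> \<rightarrow> \<alpha>\<close> gives the bound.
  For \<open>\<alpha> = 1\<close> the bound is \<open>1\<close>, attained by the zero metric on an all-strong profile.\<close>

definition l1_dist :: "('p \<Rightarrow> real \<times> real) \<Rightarrow> 'p \<Rightarrow> 'p \<Rightarrow> real" where
  "l1_dist pos p q = \<bar>fst (pos p) - fst (pos q)\<bar> + \<bar>snd (pos p) - snd (pos q)\<bar>"

lemma is_metric_on_l1_dist: "is_metric_on P (l1_dist pos)"
  unfolding is_metric_on_def l1_dist_def by auto

lemma two_agent_metric_exists:
  fixes D :: "nat \<Rightarrow> real"
  assumes "iY \<noteq> iM" and "0 \<le> s" and "\<And>a. 2 * s \<le> D a" and "\<And>a. D a \<le> 2"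
  shows "\<exists>d. is_metric_on P d \<and> (\<forall>a. d (Inl iY) (Inr a) = D a) \<and>
             (\<forall>a. d (Inl iM) (Inr a) = 1 - s)"
proof -
  define pos where "pos p = (case p of
      Inl i \<Rightarrow> (if i = iY then (1 + s, 0) else (0, 0))
    | Inr a \<Rightarrow> (1 - D a / 2, D a / 2 - s))" for p
  have "l1_dist pos (Inl iY) (Inr a) = D a" "l1_dist pos (Inl iM) (Inr a) = 1 - s" for a
    using assms(1,2) assms(3,4)[of a] by (auto simp: l1_dist_def pos_def)
  then show ?thesis using is_metric_on_l1_dist by blast
qed

text \<open>The truncated subtraction makes the exponent \<open>0\<close> from rank \<open>k + 1\<close> on.\<close>

definition geom_dist :: "real \<Rightarrow> nat \<Rightarrow> nat \<Rightarrow> real" where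
  "geom_dist \<rho> k j = 2 * \<rho> ^ (k - (j - 1))"

lemma geom_dist_bounds:
  assumes "0 < \<rho>" and "\<rho> \<le> 1"
  shows "2 * \<rho> ^ k \<le> geom_dist \<rho> k j" and "geom_dist \<rho> k j \<le> 2"
proof -
  have "\<rho> ^ k \<le> \<rho> ^ (k - (j - 1))"
    by (rule power_decreasing) (use assms in auto)
  then show "2 * \<rho> ^ k \<le> geom_dist \<rho> k j"
    by (simp add: geom_dist_def)
  have "\<rho> ^ (k - (j - 1)) \<le> 1"
    using assms by (simp add: power_le_one)
  then show "geom_dist \<rho> k j \<le> 2"
    by (simp add: geom_dist_def)
qed

lemma geom_dist_ordinary_step:
  assumes "0 < \<rho>" and "\<rho> \<le> 1" and "\<alpha> < \<rho>" and "1 \<le> j"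
  shows "geom_dist \<rho> k j \<le> geom_dist \<rho> k (j + 1)"
    and "\<alpha> * geom_dist \<rho> k (j + 1) < geom_dist \<rho> k j"
proof -
  have pos: "0 < geom_dist \<rho> k (j + 1)"
    using assms by (simp add: geom_dist_def)
  have "\<rho> ^ (k - (j - 1)) \<le> \<rho> ^ (k - (j + 1 - 1))"
    by (rule power_decreasing) (use assms in auto)
  then show "geom_dist \<rho> k j \<le> geom_dist \<rho> k (j + 1)"
    by (simp add: geom_dist_def)
  show "\<alpha> * geom_dist \<rho> k (j + 1) < geom_dist \<rho> k j"
  proof (cases "j \<le> k")
    case True
    then have "k - (j - 1) = Suc (k - (j + 1 - 1))" using \<open>1 \<le> j\<close> by simp
    then have "geom_dist \<rho> k j = \<rho> * geom_dist \<rho> k (j + 1)"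
      by (simp only: geom_dist_def power_Suc mult.left_commute)
    then show ?thesis using pos \<open>\<alpha> < \<rho>\<close> by (simp add: mult_strict_right_mono)
  next
    case False
    then have "geom_dist \<rho> k j = 2" "geom_dist \<rho> k (j + 1) = 2"
      by (simp_all add: geom_dist_def)
    then show ?thesis using assms by simp
  qed
qed

lemma cost_ratio_le_dist_alt:
  assumes "is_metric_on (points m n) d" and "alpha_consistent \<alpha> m n rk J d"
  shows "cost_ratio (social_cost n d a) (Min (social_cost n d ` {..<m})) \<le> dist_alt \<alpha> m n rk J a"
  unfolding dist_alt_def by (rule SUP_upper) (use assms in auto)

lemma dist_alt_le_dist_rule:
  assumes "1 \<le> n" and "valid_profile m n rk"
  shows "dist_alt \<alpha> m n rk J (f n rk J) \<le> dist_rule \<alpha> m f"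
  unfolding dist_rule_def
  by (rule SUP_upper2[where i="(n, rk, J)"]) (use assms in auto)

lemma one_le_dist_alt_all_strong:
  assumes "0 < m" and "0 \<le> \<alpha>"
  shows "1 \<le> dist_alt \<alpha> m n rk (\<lambda>i j. True) a"
proof -
  define d where "d = (\<lambda>(p :: nat + nat) (q :: nat + nat). 0 :: real)"
  have "social_cost n d ` {..<m} = {0}"
    using assms(1) by (auto simp: social_cost_def d_def)
  then have "1 = cost_ratio (social_cost n d a) (Min (social_cost n d ` {..<m}))"
    by (simp add: cost_ratio_def social_cost_def d_def)
  also have "\<dots> \<le> dist_alt \<alpha> m n rk (\<lambda>i j. True) a"
    using assms(2)
    by (intro cost_ratio_le_dist_alt) (auto simp: d_def is_metric_on_def alpha_consistent_def)
  finally show ?thesis .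
qed

lemma two_agent_alpha_consistent:
  assumes "0 < \<rho>" and "\<rho> \<le> 1" and "\<alpha> < \<rho>" and "0 < c" and "iY < 2"
    and rank: "\<And>j. j \<in> {1..m} \<Longrightarrow> r (rk iY j) = j"
    and dY: "\<And>a. d (Inl iY) (Inr a) = geom_dist \<rho> k (r a)"
    and dM: "\<And>a. d (Inl (1 - iY)) (Inr a) = c"
  shows "alpha_consistent \<alpha> m 2 rk (\<lambda>i j. False) d"
  unfolding alpha_consistent_def if_False
proof (intro allI impI ballI)
  fix i j :: nat
  assume "i < 2" and j: "j \<in> {1..m - 1}"
  show "d (Inl i) (Inr (rk i j)) \<le> d (Inl i) (Inr (rk i (j + 1))) \<and>
        \<alpha> * d (Inl i) (Inr (rk i (j + 1))) < d (Inl i) (Inr (rk i j))"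
  proof (cases "i = iY")
    case True
    then show ?thesis
      using rank[of j] rank[of "j + 1"] j dY geom_dist_ordinary_step[OF assms(1-3), of j k]
      by auto
  next
    case False
    then have "i = 1 - iY"
      using \<open>i < 2\<close> \<open>iY < 2\<close> by auto
    then show ?thesis
      using dM \<open>0 < c\<close> \<open>\<alpha> < \<rho>\<close> \<open>\<rho> \<le> 1\<close> by (simp add: mult_strict_right_mono)
  qed
qed

lemma two_agent_dist_alt_lower_bound:
  assumes "2 \<le> m" and "0 \<le> \<alpha>" and "\<alpha> < \<rho>" and "\<rho> < 1" and "iY < 2"
    and rank: "\<And>j. j \<in> {1..m} \<Longrightarrow> r (rk iY j) = j"
    and "y < m" and "r y = 1" and "m div 2 + 1 \<le> r x"
  shows "ereal (1 + 2 * (1 - \<rho> ^ (m div 2)) / (1 + \<rho> ^ (m div 2)))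
           \<le> dist_alt \<alpha> m 2 rk (\<lambda>i j. False) x"
proof -
  define k where "k = m div 2"
  define s where "s = \<rho> ^ k"
  define D where "D a = geom_dist \<rho> k (r a)" for a
  define iM where "iM = 1 - iY"
  have "0 < \<rho>" using assms(2,3) by linarith
  have "0 < s" "s < 1"
    using \<open>0 < \<rho>\<close> \<open>\<rho> < 1\<close> \<open>2 \<le> m\<close> by (auto simp: s_def k_def power_less_one_iff)
  have D_bounds: "\<And>a. 2 * s \<le> D a" "\<And>a. D a \<le> 2"
    using geom_dist_bounds[OF \<open>0 < \<rho>\<close>] \<open>\<rho> < 1\<close> by (simp_all add: D_def s_def)
  have "iY \<noteq> iM"
    unfolding iM_def by presburger
  then obtain d where metric: "is_metric_on (points m 2) d" and dY: "\<And>a. d (Inl iY) (Inr a) = D a"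
    and dM: "\<And>a. d (Inl iM) (Inr a) = 1 - s"
    using two_agent_metric_exists[of iY iM s D "points m 2"] less_imp_le[OF \<open>0 < s\<close>] D_bounds
    by blast
  have consistent: "alpha_consistent \<alpha> m 2 rk (\<lambda>i j. False) d"
    by (rule two_agent_alpha_consistent[where c="1 - s" and k=k and r=r])
       (use \<open>0 < \<rho>\<close> \<open>\<rho> < 1\<close> \<open>\<alpha> < \<rho>\<close> \<open>s < 1\<close> \<open>iY < 2\<close> rank dY dM in \<open>auto simp: D_def iM_def\<close>)
  have "{..<2} = {iY, iM}"
    using \<open>iY < 2\<close> by (auto simp: iM_def)
  then have sc: "social_cost 2 d a = D a + (1 - s)" for a
    using \<open>iY \<noteq> iM\<close> by (simp add: social_cost_def dY dM)
  moreover have "D x = 2" "D y = 2 * s"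
    using \<open>m div 2 + 1 \<le> r x\<close> \<open>r y = 1\<close> by (simp_all add: D_def geom_dist_def k_def s_def)
  moreover have "Min (social_cost 2 d ` {..<m}) = 1 + s"
  proof (rule Min_eqI)
    show "1 + s \<in> social_cost 2 d ` {..<m}"
      using \<open>y < m\<close> sc[of y] \<open>D y = 2 * s\<close> by (auto intro!: image_eqI[of _ _ y])
  qed (use sc D_bounds in auto)
  ultimately have "cost_ratio (social_cost 2 d x) (Min (social_cost 2 d ` {..<m}))
      = ereal (1 + 2 * (1 - s) / (1 + s))"
    using \<open>0 < s\<close> by (simp add: cost_ratio_def field_simps)
  then show ?thesis
    using cost_ratio_le_dist_alt[OF metric consistent, of x] by (simp add: s_def k_def)
qed

definition opposite_rankings :: "nat \<Rightarrow> nat \<Rightarrow> nat \<Rightarrow> nat" where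
  "opposite_rankings m i j = (if i = 0 then j - 1 else m - j)"

lemma valid_profile_opposite_rankings: "valid_profile m 2 (opposite_rankings m)"
  unfolding valid_profile_def
proof (intro allI impI)
  fix i :: nat
  show "bij_betw (opposite_rankings m i) {1..m} {..<m}"
  proof (cases "i = 0")
    case True
    then show ?thesis
      by (intro bij_betw_byWitness[where f'="\<lambda>a. a + 1"]) (auto simp: opposite_rankings_def)
  next
    case False
    then show ?thesis
      by (intro bij_betw_byWitness[where f'="\<lambda>a. m - a"]) (auto simp: opposite_rankings_def)
  qed
qed

lemma opposite_rankings_dist_alt_lower_bound:
  assumes "2 \<le> m" and "0 \<le> \<alpha>" and "\<alpha> < \<rho>" and "\<rho> < 1" and "x < m"
  shows "ereal (1 + 2 * (1 - \<rho> ^ (m div 2)) / (1 + \<rho> ^ (m div 2)))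
           \<le> dist_alt \<alpha> m 2 (opposite_rankings m) (\<lambda>i j. False) x"
proof (cases "m div 2 \<le> x")
  case True
  then show ?thesis
    by (intro two_agent_dist_alt_lower_bound[where iY=0 and r="\<lambda>a. a + 1" and y=0])
       (use assms in \<open>auto simp: opposite_rankings_def\<close>)
next
  case False
  then show ?thesis
    by (intro two_agent_dist_alt_lower_bound[where iY=1 and r="\<lambda>a. m - a" and y="m - 1"])
       (use assms in \<open>auto simp: opposite_rankings_def\<close>)
qed

lemma ereal_le_of_tendsto_at_right:
  fixes g :: "real \<Rightarrow> real" and c :: ereal
  assumes "(g \<longlongrightarrow> L) (at_right a)" and "a < b"
    and "\<And>\<rho>. a < \<rho> \<Longrightarrow> \<rho> < b \<Longrightarrow> ereal (g \<rho>) \<le> c"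
  shows "ereal L \<le> c"
proof -
  have "((\<lambda>\<rho>. ereal (g \<rho>)) \<longlongrightarrow> ereal L) (at_right a)"
    using assms(1) by (rule tendsto_ereal)
  moreover have "eventually (\<lambda>\<rho>. ereal (g \<rho>) \<le> c) (at_right a)"
    using eventually_at_right_real[OF \<open>a < b\<close>] by (rule eventually_mono) (use assms(3) in auto)
  ultimately show ?thesis
    by (rule tendsto_le[OF trivial_limit_at_right_real tendsto_const])
qed

lemma one_le_dist_rule:
  assumes "0 < m" and "0 \<le> \<alpha>"
  shows "1 \<le> dist_rule \<alpha> m f"
proof -
  have "1 \<le> dist_alt \<alpha> m 2 (opposite_rankings m) (\<lambda>i j. True) (f 2 (opposite_rankings m) (\<lambda>i j. True))"
    using assms by (rule one_le_dist_alt_all_strong)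
  also have "\<dots> \<le> dist_rule \<alpha> m f"
    by (simp add: dist_alt_le_dist_rule valid_profile_opposite_rankings)
  finally show ?thesis .
qed

lemma dist_rule_lower_bound:
  assumes "2 \<le> m" and "0 \<le> \<alpha>" and "\<alpha> < \<rho>" and "\<rho> < 1"
    and "\<And>n rk J. 1 \<le> n \<Longrightarrow> valid_profile m n rk \<Longrightarrow> f n rk J < m"
  shows "ereal (1 + 2 * (1 - \<rho> ^ (m div 2)) / (1 + \<rho> ^ (m div 2))) \<le> dist_rule \<alpha> m f"
proof -
  have "f 2 (opposite_rankings m) (\<lambda>i j. False) < m"
    by (simp add: assms(5) valid_profile_opposite_rankings)
  then have "ereal (1 + 2 * (1 - \<rho> ^ (m div 2)) / (1 + \<rho> ^ (m div 2)))
      \<le> dist_alt \<alpha> m 2 (opposite_rankings m) (\<lambda>i j. False) (f 2 (opposite_rankings m) (\<lambda>i j. False))"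
    by (rule opposite_rankings_dist_alt_lower_bound[OF assms(1-4)])
  also have "\<dots> \<le> dist_rule \<alpha> m f"
    by (simp add: dist_alt_le_dist_rule valid_profile_opposite_rankings)
  finally show ?thesis .
qed

theorem lemma1:
  fixes m :: nat and \<alpha> :: real
    and f :: "nat \<Rightarrow> (nat \<Rightarrow> nat \<Rightarrow> nat) \<Rightarrow> (nat \<Rightarrow> nat \<Rightarrow> bool) \<Rightarrow> nat"
  assumes "m \<ge> 2" and "0 \<le> \<alpha>" and "\<alpha> \<le> 1"
    and "\<And>n rk J. n \<ge> 1 \<Longrightarrow> valid_profile m n rk \<Longrightarrow> f n rk J < m"
  shows "dist_rule \<alpha> m f \<ge>
           ereal (1 + 2 * (1 - \<alpha> ^ (m div 2)) / (1 + \<alpha> ^ (m div 2)))"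
proof (cases "\<alpha> = 1")
  case True
  have "ereal (1 + 2 * (1 - \<alpha> ^ (m div 2)) / (1 + \<alpha> ^ (m div 2))) = 1"
    using True by simp
  also have "1 \<le> dist_rule \<alpha> m f"
    using assms(1,2) by (intro one_le_dist_rule) auto
  finally show ?thesis .
next
  case False
  then have "\<alpha> < 1"
    using assms(3) by simp
  let ?g = "\<lambda>\<rho>. 1 + 2 * (1 - \<rho> ^ (m div 2)) / (1 + \<rho> ^ (m div 2))"
  have "0 \<le> \<alpha> ^ (m div 2)"
    using assms(2) by simp
  then have "(?g \<longlongrightarrow> ?g \<alpha>) (at_right \<alpha>)"
    by (intro tendsto_intros) auto
  then show ?thesis
    using \<open>\<alpha> < 1\<close> by (rule ereal_le_of_tendsto_at_right) (rule dist_rule_lower_bound[OF assms(1,2) _ _ assms(4)])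
qed

end
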